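(* Let $(X,\mathcal{H},\lambda)$ be a homogenizer, $\Omega\subset X$ a nonempty open set (with the restriction of $\lambda$), and $A$ a closed vector subspace of $\Pi^\infty(X,\mathcal{H},\lambda)$ with the sup norm. For $u\in L^p(\Omega;A)$ let $\tilde u(x)=M(u(x))$, $x\in\Omega$, and $u^\varepsilon(x)=u(x,H_\varepsilon(x))$. Then: (i) for $u\in\mathcal{K}(\Omega;A)$ (continuous compactly supported maps $\Omega\to A$), $u^\varepsilon\to\tilde u$ weak-$*$ in $L^\infty(\Omega)$ as $\varepsilon\to\theta$; (ii) for $u\in L^p(\Omega;A)$ with $1\le p<+\infty$, $u^\varepsilon\to\tilde u$ weakly in $L^p(\Omega)$ as $\varepsilon\to\theta$.
   Context: An $\mathbb{R}$-group is an abelian group $E$ (operation written multiplicatively) whose underlying set is a subset of $\mathbb{R}$ containing all positive integers, such that: (RG1) with the natural order of $\mathbb{R}$, $E$ is a totally ordered group; (RG2) with the topology induced from $\mathbb{R}$, $E$ is a locally compact group; (RG3) there is a nonconstant continuous homomorphism $h:E\to\mathbb{R}_+^*$ such that for every $\alpha\in E$ the set $\{\varepsilon\in E:\varepsilon\ge\alpha\}$ is integrable for $h\cdot m$, $m$ a Haar measure on $E$. $e$ is the identity of $E$, $\varepsilon^{-1}$ the group inverse, $\theta=\inf E\in\mathbb{R}\cup\{\pm\infty\}$; inequalities refer to the order of $\mathbb{R}$. An action of $E$ on $X$ is a family $(H_\varepsilon)_{\varepsilon\in E}$ of bijections of $X$ with $H_\varepsilon\circ H_{\varepsilon'}=H_{\varepsilon\varepsilon'}$,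 $H_e=\mathrm{id}_X$; continuous if $(\varepsilon,x)\mapsto H_\varepsilon(x)$ is continuous on $E\times X$; absorptive if some $\omega\in X$ satisfies: for every neighbourhood $V$ of $\omega$ and every $x\in X$ there are a neighbourhood $U$ of $x$ and $\alpha\in E$ with $H_{\varepsilon^{-1}}(U)\subset V$ for all $\varepsilon\le\alpha$; this $\omega$ is unique, the center. A positive Radon measure $\lambda$ is $\mathcal{H}$-homogeneous if for each $\varepsilon$ there is $c(\varepsilon)>0$ with $\int\varphi(H_\varepsilon(x))d\lambda(x)=c(\varepsilon)\int\varphi\,d\lambda$ for all $\varphi\in\mathcal{K}(X)$; nontrivial if $\lambda\ne0$, $\lambda\ne\delta_\omega$. A homogenizer is a triple $(X,\mathcal{H},\lambda)$ with $X$ a noncompact locally compact space in which each point has a countable neighbourhood base, $\mathcal{H}$ a continuous absorptive action of an $\mathbb{R}$-group $E$ on $X$, $\lambda$ a nontrivial $\mathcal{H}$-homogeneous positive Radon measure; $X$ is equipped with $\lambda$. $\mathcal{B}(X)$ is the space of bounded continuous complex functions on $X$ with the sup norm. $\Pi^\infty(X,\mathcal{H},\lambda)$ is the space of $u\in\mathcal{B}(X)$ for which there is a constant $\tilde u\in\mathbb{C}$ with $u\circ H_\varepsilon\to\tilde u$ weak-$*$ in $L^\infty(X)$ as $\varepsilon\to\theta$; the mean value is $M(u)=\tilde u$. For $u\in L^p(\Omega;A)$, $u(x,y)$ denotes the value at $y\in X$ of $u(x)\in A$; the function $x\mapsto u(x,H_\varepsilon(x))$ is defined a.e. and lies in $L^p(\Omega)$.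 *)

theory Defs
  imports "HOL-Analysis.Analysis"
begin

definition grinv :: "real set \<Rightarrow> (real \<Rightarrow> real \<Rightarrow> real) \<Rightarrow> real \<Rightarrow> real \<Rightarrow> real" where
  "grinv E mul e x = (THE y. y \<in> E \<and> mul x y = e)"

definition abelian_group_on :: "real set \<Rightarrow> (real \<Rightarrow> real \<Rightarrow> real) \<Rightarrow> real \<Rightarrow> bool" where
  "abelian_group_on E mul e \<longleftrightarrow>
     e \<in> E \<and>
     (\<forall>a\<in>E. \<forall>b\<in>E. mul a b \<in> E) \<and>
     (\<forall>a\<in>E. \<forall>b\<in>E. \<forall>c\<in>E. mul (mul a b) c = mul a (mul b c)) \<and>
     (\<forall>a\<in>E. \<forall>b\<in>E. mul a b = mul b a) \<and>
     (\<forall>a\<in>E. mul e a = a) \<and>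
     (\<forall>a\<in>E. \<exists>b\<in>E. mul a b = e)"

definition haar_measure_on :: "real set \<Rightarrow> (real \<Rightarrow> real \<Rightarrow> real) \<Rightarrow> real measure \<Rightarrow> bool" where
  "haar_measure_on E mul m \<longleftrightarrow>
     sets m = sets (restrict_space borel E) \<and>
     (\<forall>K. compact K \<and> K \<subseteq> E \<longrightarrow> emeasure m K < \<infinity>) \<and>
     (\<forall>U. openin (top_of_set E) U \<and> U \<noteq> {} \<longrightarrow> emeasure m U > 0) \<and>
     (\<forall>a\<in>E. \<forall>B\<in>sets m. mul a ` B \<in> sets m \<and> emeasure m (mul a ` B) = emeasure m B)"

definition R_group :: "real set \<Rightarrow> (real \<Rightarrow> real \<Rightarrow> real) \<Rightarrow> real \<Rightarrow> bool" where
  "R_group E mul e \<longleftrightarrow>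
     abelian_group_on E mul e \<and>
     (\<forall>n::nat. n \<ge> 1 \<longrightarrow> real n \<in> E) \<and>
     \<comment> \<open>(RG1) totally ordered group for the natural order of the reals\<close>
     (\<forall>a\<in>E. \<forall>b\<in>E. \<forall>c\<in>E. a \<le> b \<longrightarrow> mul a c \<le> mul b c) \<and>
     \<comment> \<open>(RG2) locally compact topological group for the induced topology\<close>
     continuous_on (E \<times> E) (\<lambda>(a, b). mul a b) \<and>
     continuous_on E (grinv E mul e) \<and>
     locally compact E \<and>
     \<comment> \<open>(RG3)\<close>
     (\<exists>h :: real \<Rightarrow> real.
        continuous_on E h \<and> (\<forall>a\<in>E. h a > 0) \<and>
        (\<forall>a\<in>E. \<forall>b\<in>E. h (mul a b) = h a * h b) \<and>
        (\<exists>a\<in>E. \<exists>b\<in>E. h a \<noteq> h b) \<and>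
        (\<exists>m. haar_measure_on E mul m \<and>
           (\<forall>\<alpha>\<in>E. emeasure (density m (\<lambda>x. ennreal (h x))) {\<epsilon>\<in>E. \<alpha> \<le> \<epsilon>} < \<infinity>)))"

text \<open>The filter "\<epsilon> \<rightarrow> \<theta> = inf E" (within E).\<close>
definition to_theta :: "real set \<Rightarrow> real filter" where
  "to_theta E = (INF \<alpha>\<in>E. principal {\<epsilon>\<in>E. \<epsilon> \<le> \<alpha>})"

definition is_action :: "real set \<Rightarrow> (real \<Rightarrow> real \<Rightarrow> real) \<Rightarrow> real \<Rightarrow> (real \<Rightarrow> 'a \<Rightarrow> 'a) \<Rightarrow> bool" where
  "is_action E mul e H \<longleftrightarrow>
     (\<forall>\<epsilon>\<in>E. bij (H \<epsilon>)) \<and>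
     (\<forall>\<epsilon>\<in>E. \<forall>\<epsilon>'\<in>E. H \<epsilon> \<circ> H \<epsilon>' = H (mul \<epsilon> \<epsilon>')) \<and>
     H e = id"

definition is_center :: "real set \<Rightarrow> (real \<Rightarrow> real \<Rightarrow> real) \<Rightarrow> real \<Rightarrow> (real \<Rightarrow> 'a::topological_space \<Rightarrow> 'a) \<Rightarrow> 'a \<Rightarrow> bool" where
  "is_center E mul e H \<omega> \<longleftrightarrow>
     (\<forall>V. open V \<and> \<omega> \<in> V \<longrightarrow>
        (\<forall>x. \<exists>U \<alpha>. open U \<and> x \<in> U \<and> \<alpha> \<in> E \<and>
               (\<forall>\<epsilon>\<in>E. \<epsilon> \<le> \<alpha> \<longrightarrow> H (grinv E mul e \<epsilon>) ` U \<subseteq> V)))"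

definition center :: "real set \<Rightarrow> (real \<Rightarrow> real \<Rightarrow> real) \<Rightarrow> real \<Rightarrow> (real \<Rightarrow> 'a::topological_space \<Rightarrow> 'a) \<Rightarrow> 'a" where
  "center E mul e H = (THE \<omega>. is_center E mul e H \<omega>)"

definition absorptive :: "real set \<Rightarrow> (real \<Rightarrow> real \<Rightarrow> real) \<Rightarrow> real \<Rightarrow> (real \<Rightarrow> 'a::topological_space \<Rightarrow> 'a) \<Rightarrow> bool" where
  "absorptive E mul e H \<longleftrightarrow> (\<exists>\<omega>. is_center E mul e H \<omega>)"

definition Kc :: "('a::topological_space \<Rightarrow> complex) set" where
  "Kc = {\<phi>. continuous_on UNIV \<phi> \<and> (\<exists>K. compact K \<and> (\<forall>x. x \<notin> K \<longrightarrow> \<phi> x = 0))}"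

definition radon_measure :: "'a::topological_space measure \<Rightarrow> bool" where
  "radon_measure M \<longleftrightarrow>
     sets M = sets borel \<and>
     (\<forall>K. compact K \<longrightarrow> emeasure M K < \<infinity>) \<and>
     (\<forall>B\<in>sets borel. emeasure M B = (INF U\<in>{U. open U \<and> B \<subseteq> U}. emeasure M U)) \<and>
     (\<forall>U. open U \<longrightarrow> emeasure M U = (SUP K\<in>{K. compact K \<and> K \<subseteq> U}. emeasure M K))"

definition homogeneous :: "real set \<Rightarrow> (real \<Rightarrow> 'a::topological_space \<Rightarrow> 'a) \<Rightarrow> 'a measure \<Rightarrow> bool" where
  "homogeneous E H M \<longleftrightarrow>
     (\<forall>\<epsilon>\<in>E. \<exists>c::real. c > 0 \<and>
        (\<forall>\<phi>\<in>Kc. (LINT x|M. \<phi> (H \<epsilon> x)) = complex_of_real c * (LINT x|M. \<phi> x)))"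

definition homogenizer ::
  "real set \<Rightarrow> (real \<Rightarrow> real \<Rightarrow> real) \<Rightarrow> real \<Rightarrow> (real \<Rightarrow> 'a::{t2_space,first_countable_topology} \<Rightarrow> 'a)
    \<Rightarrow> 'a measure \<Rightarrow> bool" where
  "homogenizer E mul e H M \<longleftrightarrow>
     R_group E mul e \<and>
     locally compact (UNIV :: 'a set) \<and> \<not> compact (UNIV :: 'a set) \<and>
     is_action E mul e H \<and>
     continuous_on (E \<times> UNIV) (\<lambda>(\<epsilon>, x). H \<epsilon> x) \<and>
     absorptive E mul e H \<and>
     radon_measure M \<and> homogeneous E H M \<and>
     (\<exists>B\<in>sets M. emeasure M B \<noteq> 0) \<and>
     \<comment> \<open>M is not the Dirac measure at the center\<close>
     \<not> (\<forall>B\<in>sets M. emeasure M B = indicator B (center E mul e H))"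

definition wstar_tendsto :: "'a measure \<Rightarrow> ('i \<Rightarrow> 'a \<Rightarrow> complex) \<Rightarrow> ('a \<Rightarrow> complex) \<Rightarrow> 'i filter \<Rightarrow> bool" where
  "wstar_tendsto M f l F \<longleftrightarrow>
     (\<forall>g::'a \<Rightarrow> complex. integrable M g \<longrightarrow>
        ((\<lambda>i. LINT x|M. g x * f i x) \<longlongrightarrow> (LINT x|M. g x * l x)) F)"

definition Pi_inf :: "real set \<Rightarrow> (real \<Rightarrow> 'a::topological_space \<Rightarrow> 'a) \<Rightarrow> 'a measure \<Rightarrow> ('a \<Rightarrow>\<^sub>C complex) set" where
  "Pi_inf E H M = {u. \<exists>c::complex. wstar_tendsto M (\<lambda>\<epsilon> x. apply_bcontfun u (H \<epsilon> x)) (\<lambda>_. c) (to_theta E)}"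

definition mean_value :: "real set \<Rightarrow> (real \<Rightarrow> 'a::topological_space \<Rightarrow> 'a) \<Rightarrow> 'a measure \<Rightarrow> ('a \<Rightarrow>\<^sub>C complex) \<Rightarrow> complex" where
  "mean_value E H M u = (THE c. wstar_tendsto M (\<lambda>\<epsilon> x. apply_bcontfun u (H \<epsilon> x)) (\<lambda>_. c) (to_theta E))"

definition closed_complex_subspace :: "('a::topological_space \<Rightarrow>\<^sub>C complex) set \<Rightarrow> bool" where
  "closed_complex_subspace A \<longleftrightarrow>
     closed A \<and> 0 \<in> A \<and> (\<forall>u\<in>A. \<forall>v\<in>A. u + v \<in> A) \<and>
     (\<forall>u\<in>A. \<forall>c::complex. \<exists>v\<in>A. \<forall>y. apply_bcontfun v y = c * apply_bcontfun u y)"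

definition Kc_vec :: "'a::topological_space set \<Rightarrow> ('a \<Rightarrow>\<^sub>C complex) set \<Rightarrow> ('a \<Rightarrow> ('a \<Rightarrow>\<^sub>C complex)) set" where
  "Kc_vec \<Omega> A = {u. (\<forall>x\<in>\<Omega>. u x \<in> A) \<and> continuous_on \<Omega> u \<and>
                    (\<exists>K. compact K \<and> K \<subseteq> \<Omega> \<and> (\<forall>x\<in>\<Omega> - K. u x = 0))}"

text \<open>L^p(\<Omega>;A) (Bochner space), via a representative: strongly measurable
  (pointwise limit on \<Omega> of measurable simple functions), A-valued, p-integrable norm.\<close>
definition Lp_vec :: "'a::topological_space measure \<Rightarrow> real \<Rightarrow> ('a \<Rightarrow>\<^sub>C complex) set \<Rightarrow> ('a \<Rightarrow> ('a \<Rightarrow>\<^sub>C complex)) set" where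
  "Lp_vec M p A = {u. (\<forall>x\<in>space M. u x \<in> A) \<and>
       (\<exists>s :: nat \<Rightarrow> 'a \<Rightarrow> ('a \<Rightarrow>\<^sub>C complex).
          (\<forall>n. simple_function M (s n)) \<and> (\<forall>x\<in>space M. (\<lambda>n. s n x) \<longlonglongrightarrow> u x)) \<and>
       integrable M (\<lambda>x. norm (u x) powr p)}"

definition in_Lp :: "'a measure \<Rightarrow> real \<Rightarrow> ('a \<Rightarrow> complex) \<Rightarrow> bool" where
  "in_Lp M p f \<longleftrightarrow> f \<in> borel_measurable M \<and> integrable M (\<lambda>x. norm (f x) powr p)"

definition in_Lconj :: "'a measure \<Rightarrow> real \<Rightarrow> ('a \<Rightarrow> complex) \<Rightarrow> bool" where
  "in_Lconj M p g \<longleftrightarrow> g \<in> borel_measurable M \<and>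
     (if p = 1 then (\<exists>C. AE x in M. norm (g x) \<le> C)
      else integrable M (\<lambda>x. norm (g x) powr (p / (p - 1))))"

definition weak_Lp_tendsto :: "'a measure \<Rightarrow> real \<Rightarrow> ('i \<Rightarrow> 'a \<Rightarrow> complex) \<Rightarrow> ('a \<Rightarrow> complex) \<Rightarrow> 'i filter \<Rightarrow> bool" where
  "weak_Lp_tendsto M p f l F \<longleftrightarrow>
     (\<forall>g. in_Lconj M p g \<longrightarrow>
        ((\<lambda>i. LINT x|M. f i x * g x) \<longlongrightarrow> (LINT x|M. l x * g x)) F)"

end

theory Submission
  imports Defs
begin

text \<open>
  The mean value M(a) is the weak-* limit of a o H(eps); testing against the
  indicator of a set of finite positive measure shows that this limit is unique, that M is
  linear and that |M(a)| <= ||a||, so M is 1-Lipschitz on A.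

  For an A-valued simple function v the claim is a finite sum of the defining convergences of
  the values of v.  A map u that is a pointwise limit of simple functions is approximated by
  A-valued simple functions w_n with ||w_n|| <= 2 ||u|| (replace each value by a nearly closest
  point of A and cut off the large ones); since both c |-> c(H(eps) x) and c |-> M(c) are
  1-Lipschitz, dominated convergence makes the error small uniformly in eps.  This gives one
  convergence lemma for every test function g with |g| ||u|| integrable and g integrable on
  the sets {||u|| >= r}, r > 0.  Part (i) applies it to g in L^1 (a continuous compactly
  supported u has compact range, hence is a limit of simple functions), part (ii) to g in the
  conjugate space L^p' through a Young-type estimate.
\<close>

text \<open>A crude form of Young's inequality, enough for integrability questions.\<close>
lemma young_product_bound:
  fixes a b p :: real
  assumes "p > 1" "a \<ge> 0" "b \<ge> 0"
  shows "a * b \<le> a powr (p / (p - 1)) + b powr p"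
proof -
  define q where "q = p / (p - 1)"
  have q1: "q > 1" unfolding q_def using assms(1) by (simp add: less_divide_eq)
  have conj: "1/q + 1/p = 1" unfolding q_def using assms(1) by (simp add: field_simps)
  have "a * b \<le> a powr q / q + b powr p / p"
    by (rule Youngs_inequality[OF q1 assms(1) conj assms(2,3)])
  also have "a powr q / q \<le> a powr q"
    using mult_left_mono[of 1 q "a powr q"] q1 by (simp add: divide_le_eq)
  also have "b powr p / p \<le> b powr p"
    using mult_left_mono[of 1 p "b powr p"] assms(1) by (simp add: divide_le_eq)
  finally show ?thesis by (simp add: q_def)
qed

lemma integrable_norm_mult_Lconj:
  fixes g :: "'b \<Rightarrow> complex" and f :: "'b \<Rightarrow> real"
  assumes p: "1 \<le> p" and g: "in_Lconj N p g"
    and f: "f \<in> borel_measurable N" "\<And>x. x \<in> space N \<Longrightarrow> 0 \<le> f x"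
    and fp: "integrable N (\<lambda>x. f x powr p)"
  shows "integrable N (\<lambda>x. norm (g x) * f x)"
proof -
  have "g \<in> borel_measurable N" using g by (simp add: in_Lconj_def)
  then have meas: "(\<lambda>x. norm (g x) * f x) \<in> borel_measurable N"
    using f(1) by measurable
  show ?thesis
  proof (cases "p = 1")
    case True
    then obtain C where C: "AE x in N. norm (g x) \<le> C" using g by (auto simp: in_Lconj_def)
    have "integrable N f"
      using fp by (rule Bochner_Integration.integrable_cong[THEN iffD1, rotated 2])
        (use True f(2) in auto)
    then show ?thesis
    proof (rule Bochner_Integration.integrable_bound[where f="\<lambda>x. \<bar>C\<bar> * f x", OF integrable_mult_right meas])
      show "AE x in N. norm (norm (g x) * f x) \<le> norm (\<bar>C\<bar> * f x)"
        using C AE_space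
      proof eventually_elim
        case (elim x)
        have "norm (g x) * f x \<le> \<bar>C\<bar> * f x"
          using elim f(2) by (intro mult_right_mono) auto
        then show ?case using f(2)[OF elim(2)] by (simp add: abs_mult)
      qed
    qed
  next
    case False
    then have p1: "p > 1" using p by simp
    have gq: "integrable N (\<lambda>x. norm (g x) powr (p / (p - 1)))"
      using g False by (simp add: in_Lconj_def)
    show ?thesis
    proof (rule Bochner_Integration.integrable_bound[OF Bochner_Integration.integrable_add[OF gq fp] meas])
      show "AE x in N. norm (norm (g x) * f x) \<le> norm (norm (g x) powr (p / (p - 1)) + f x powr p)"
        using young_product_bound[OF p1 norm_ge_zero f(2)] f(2) by (intro AE_I2) (simp add: abs_mult)
    qed
  qed
qed

lemma integrable_indicator_superlevel:
  fixes f :: "'b \<Rightarrow> real"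
  assumes f: "f \<in> borel_measurable N" "\<And>x. x \<in> space N \<Longrightarrow> 0 \<le> f x"
    and fp: "integrable N (\<lambda>x. f x powr p)" and p: "p > 0" and r: "r > 0"
  shows "integrable N (indicator {x\<in>space N. r \<le> f x} :: 'b \<Rightarrow> real)"
proof (rule Bochner_Integration.integrable_bound[where f="\<lambda>x. r powr (-p) * f x powr p"])
  show "integrable N (\<lambda>x. r powr (-p) * f x powr p)" using fp by simp
  show "(indicator {x\<in>space N. r \<le> f x} :: 'b \<Rightarrow> real) \<in> borel_measurable N"
    using f(1) by measurable
  show "AE x in N. norm (indicator {x\<in>space N. r \<le> f x} x :: real) \<le> norm (r powr (-p) * f x powr p)"
  proof (rule AE_I2)
    fix x assume x: "x \<in> space N"
    show "norm (indicator {x\<in>space N. r \<le> f x} x :: real) \<le> norm (r powr (-p) * f x powr p)"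
    proof (cases "r \<le> f x")
      case True
      then have "r powr p \<le> f x powr p" using p r by (intro powr_mono2) auto
      then have "1 \<le> r powr (-p) * f x powr p"
        using r by (simp add: powr_minus field_simps)
      then show ?thesis using x True by simp
    qed (simp add: x)
  qed
qed

lemma integrable_Lconj_superlevel:
  fixes g :: "'b \<Rightarrow> complex" and f :: "'b \<Rightarrow> real"
  assumes p: "1 \<le> p" and g: "in_Lconj N p g"
    and f: "f \<in> borel_measurable N" "\<And>x. x \<in> space N \<Longrightarrow> 0 \<le> f x"
    and fp: "integrable N (\<lambda>x. f x powr p)" and r: "r > 0"
  shows "integrable N (\<lambda>x. indicator {x\<in>space N. r \<le> f x} x *\<^sub>R g x)"
proof -
  let ?L = "{x\<in>space N. r \<le> f x}"
  have L: "?L \<in> sets N" using f(1) by measurable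
  have "integrable N (indicator ?L :: 'b \<Rightarrow> real)"
    using integrable_indicator_superlevel[OF f fp _ r] p by simp
  moreover have "(\<lambda>x. (indicator ?L x :: real) powr p) = indicator ?L"
    using p by (auto simp: fun_eq_iff split: split_indicator)
  ultimately have "integrable N (\<lambda>x. norm (g x) * indicator ?L x)"
    using L by (intro integrable_norm_mult_Lconj[OF p g]) auto
  then show ?thesis
  proof (rule Bochner_Integration.integrable_bound)
    have "g \<in> borel_measurable N" using g by (simp add: in_Lconj_def)
    then show "(\<lambda>x. indicator ?L x *\<^sub>R g x) \<in> borel_measurable N"
      using L by measurable
    show "AE x in N. norm (indicator ?L x *\<^sub>R g x) \<le> norm (norm (g x) * indicator ?L x)"
      by (rule AE_I2) (simp split: split_indicator)
  qed
qed

lemma integrable_mult_bounded: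
  fixes g f :: "'b \<Rightarrow> complex"
  assumes "integrable N g" "f \<in> borel_measurable N" "\<And>x. x \<in> space N \<Longrightarrow> norm (f x) \<le> B"
  shows "integrable N (\<lambda>x. g x * f x)"
proof (rule Bochner_Integration.integrable_bound[where f="\<lambda>x. of_real B * g x"])
  show "integrable N (\<lambda>x. of_real B * g x)" using assms(1) by simp
  show "(\<lambda>x. g x * f x) \<in> borel_measurable N" using assms(1,2) by measurable
  have "B \<ge> 0" if "x \<in> space N" for x using assms(3)[OF that] norm_ge_zero order_trans by blast
  then show "AE x in N. norm (g x * f x) \<le> norm (of_real B * g x)"
    using assms(3) by (intro AE_I2) (auto simp: norm_mult abs_of_nonneg mult.commute intro: mult_right_mono)
qed

lemma integral_mult_diff_bound:
  fixes g a b :: "'b \<Rightarrow> complex"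
  assumes ia: "integrable N (\<lambda>x. g x * a x)" and ib: "integrable N (\<lambda>x. g x * b x)"
    and d: "integrable N (\<lambda>x. norm (g x) * d x)"
    and ab: "\<And>x. x \<in> space N \<Longrightarrow> norm (a x - b x) \<le> d x"
  shows "norm ((LINT x|N. g x * a x) - (LINT x|N. g x * b x)) \<le> (LINT x|N. norm (g x) * d x)"
proof -
  have "(LINT x|N. g x * a x) - (LINT x|N. g x * b x) = (LINT x|N. g x * a x - g x * b x)"
    using ia ib by simp
  also have "norm \<dots> \<le> (LINT x|N. norm (g x * a x - g x * b x))" by (rule integral_norm_bound)
  also have "\<dots> \<le> (LINT x|N. norm (g x) * d x)"
  proof (rule integral_mono)
    show "integrable N (\<lambda>x. norm (g x * a x - g x * b x))" using ia ib by auto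
    fix x assume "x \<in> space N"
    then show "norm (g x * a x - g x * b x) \<le> norm (g x) * d x"
      using ab by (simp add: norm_mult right_diff_distrib[symmetric] mult_left_mono)
  qed (rule d)
  finally show ?thesis .
qed

lemma integral_sum_representation:
  fixes h :: "'b \<Rightarrow> 'd::{banach, second_countable_topology}"
  assumes int: "\<And>c. c \<in> R \<Longrightarrow> integrable N (f c)"
    and repr: "\<And>x. x \<in> space N \<Longrightarrow> h x = (\<Sum>c\<in>R. f c x)"
  shows "integrable N h" and "(LINT x|N. h x) = (\<Sum>c\<in>R. LINT x|N. f c x)"
proof -
  have "integrable N h \<longleftrightarrow> integrable N (\<lambda>x. \<Sum>c\<in>R. f c x)"
    using repr by (intro Bochner_Integration.integrable_cong) simp_all
  then show "integrable N h" using int by (simp add: Bochner_Integration.integrable_sum)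
  have "(LINT x|N. h x) = (LINT x|N. (\<Sum>c\<in>R. f c x))"
    using repr by (rule Bochner_Integration.integral_cong[OF refl])
  also have "\<dots> = (\<Sum>c\<in>R. LINT x|N. f c x)" using int by (rule Bochner_Integration.integral_sum)
  finally show "(LINT x|N. h x) = (\<Sum>c\<in>R. LINT x|N. f c x)" .
qed

text \<open>If w_n -> u pointwise with ||w_n|| <= 2 ||u|| and |g| ||u|| is integrable, then the
  weighted approximation error int |g| dist(u, w_n) tends to 0 (dominated convergence,
  dominant 3 |g| ||u||).\<close>
lemma dominated_approximation_error:
  fixes u :: "'b \<Rightarrow> 'c::real_normed_vector" and g :: "'b \<Rightarrow> complex"
  assumes w: "\<And>x. x \<in> space N \<Longrightarrow> (\<lambda>n. w n x) \<longlonglongrightarrow> u x" "\<And>n x. norm (w n x) \<le> 2 * norm (u x)"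
    and dist_meas: "\<And>n. (\<lambda>x. dist (u x) (w n x)) \<in> borel_measurable N"
    and g: "g \<in> borel_measurable N" "integrable N (\<lambda>x. norm (g x) * norm (u x))"
  shows "integrable N (\<lambda>x. norm (g x) * dist (u x) (w n x))"
    and "(\<lambda>n. LINT x|N. norm (g x) * dist (u x) (w n x)) \<longlonglongrightarrow> 0"
proof -
  define err where "err n x = norm (g x) * dist (u x) (w n x)" for n x
  have dom: "AE x in N. norm (err n x) \<le> 3 * (norm (g x) * norm (u x))" for n
  proof (rule AE_I2)
    fix x
    have "dist (u x) (w n x) \<le> 3 * norm (u x)"
      using norm_triangle_ineq4[of "u x" "w n x"] w(2)[of n x] by (simp add: dist_norm)
    then have "norm (g x) * dist (u x) (w n x) \<le> norm (g x) * (3 * norm (u x))"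
      by (rule mult_left_mono) simp
    then show "norm (err n x) \<le> 3 * (norm (g x) * norm (u x))" by (simp add: err_def mult.left_commute)
  qed
  have meas: "err n \<in> borel_measurable N" for n
    unfolding err_def using dist_meas g(1) by measurable
  have lim: "AE x in N. (\<lambda>n. err n x) \<longlonglongrightarrow> 0"
  proof (rule AE_I2)
    fix x assume "x \<in> space N"
    then have "(\<lambda>n. dist (u x) (w n x)) \<longlonglongrightarrow> dist (u x) (u x)"
      using w(1) by (intro tendsto_intros) auto
    then show "(\<lambda>n. err n x) \<longlonglongrightarrow> 0"
      unfolding err_def using tendsto_mult_left[of _ 0 _ "norm (g x)"] by simp
  qed
  have "integrable N (err n)"
    by (rule integrable_dominated_convergence2[OF _ meas _ lim dom]) (use g(2) in simp_all)
  then show "integrable N (\<lambda>x. norm (g x) * dist (u x) (w n x))" unfolding err_def[abs_def] .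
  have "(\<lambda>n. LINT x|N. err n x) \<longlonglongrightarrow> (LINT x|N. (\<lambda>x. 0::real) x)"
    by (rule integral_dominated_convergence[OF _ meas _ lim dom]) (use g(2) in simp_all)
  then show "(\<lambda>n. LINT x|N. norm (g x) * dist (u x) (w n x)) \<longlonglongrightarrow> 0" by (simp add: err_def)
qed

lemma tendsto_uniform_approximation:
  fixes f :: "'i \<Rightarrow> 'b::real_normed_vector"
  assumes "\<And>\<eta>. \<eta> > 0 \<Longrightarrow> \<exists>fa La. (fa \<longlongrightarrow> La) G \<and>
      eventually (\<lambda>i. norm (f i - fa i) \<le> \<eta>) G \<and> norm (L - La) \<le> \<eta>"
  shows "(f \<longlongrightarrow> L) G"
proof (rule tendstoI)
  fix r :: real assume r: "r > 0"
  then obtain fa La where fa: "(fa \<longlongrightarrow> La) G" "eventually (\<lambda>i. norm (f i - fa i) \<le> r/4) G"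
    "norm (L - La) \<le> r/4"
    using assms[of "r/4"] by auto
  have "eventually (\<lambda>i. dist (fa i) La < r/4) G" using fa(1) r by (intro tendstoD) auto
  with fa(2) show "eventually (\<lambda>i. dist (f i) L < r) G"
  proof eventually_elim
    case (elim i)
    have "f i - L = ((f i - fa i) + (fa i - La)) + (La - L)" by simp
    then have "norm (f i - L) \<le> norm (f i - fa i) + norm (fa i - La) + norm (La - L)"
      by (metis norm_triangle_ineq order_trans add_right_mono)
    then show ?case using elim fa(3) r by (simp add: dist_norm norm_minus_commute)
  qed
qed

lemma eventually_to_theta:
  assumes "E \<noteq> {}"
  shows "eventually P (to_theta E) \<longleftrightarrow> (\<exists>b\<in>E. \<forall>\<epsilon>\<in>E. \<epsilon> \<le> b \<longrightarrow> P \<epsilon>)"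
  unfolding to_theta_def
proof (subst eventually_INF_base)
  show "\<And>a b. a \<in> E \<Longrightarrow> b \<in> E \<Longrightarrow>
      \<exists>x\<in>E. principal {\<epsilon> \<in> E. \<epsilon> \<le> x} \<le> inf (principal {\<epsilon> \<in> E. \<epsilon> \<le> a}) (principal {\<epsilon> \<in> E. \<epsilon> \<le> b})"
    by (rule_tac x="min a b" in bexI) (auto simp: min_def)
qed (auto simp: eventually_principal assms)

lemma to_theta_nontrivial: "E \<noteq> {} \<Longrightarrow> to_theta E \<noteq> bot"
  unfolding trivial_limit_def by (auto simp: eventually_to_theta)

lemma eventually_to_theta_in: "E \<noteq> {} \<Longrightarrow> eventually (\<lambda>\<epsilon>. \<epsilon> \<in> E) (to_theta E)"
  by (auto simp: eventually_to_theta)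

subsection \<open>Strongly measurable maps\<close>

text \<open>A map is strongly measurable if it is a pointwise limit of simple functions.  This is
  the measurability notion of the Bochner space L^p(Omega; A), whose target A is in general
  not separable.\<close>
definition strongly_measurable :: "'b measure \<Rightarrow> ('b \<Rightarrow> 'c::topological_space) \<Rightarrow> bool" where
  "strongly_measurable M u \<longleftrightarrow>
     (\<exists>s. (\<forall>n. simple_function M (s n)) \<and> (\<forall>x\<in>space M. (\<lambda>n. s n x) \<longlonglongrightarrow> u x))"

lemma strongly_measurable_imp_borel:
  fixes u :: "'b \<Rightarrow> 'c::metric_space"
  assumes "strongly_measurable M u"
  shows "u \<in> borel_measurable M"
proof -
  obtain s where s: "\<And>n. simple_function M (s n)" "\<And>x. x \<in> space M \<Longrightarrow> (\<lambda>n. s n x) \<longlonglongrightarrow> u x"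
    using assms unfolding strongly_measurable_def by blast
  show ?thesis by (rule borel_measurable_LIMSEQ_metric[OF borel_measurable_simple_function[OF s(1)] s(2)])
qed

fun net_select :: "real \<Rightarrow> 'b::metric_space list \<Rightarrow> 'b \<Rightarrow> 'b \<Rightarrow> 'b" where
  "net_select \<eta> [] d y = d"
| "net_select \<eta> (c # cs) d y = (if dist y c < \<eta> then c else net_select \<eta> cs d y)"

lemma net_select_range: "net_select \<eta> cs d y \<in> insert d (set cs)"
  by (induction cs) auto

lemma net_select_dist: "\<exists>c\<in>set cs. dist y c < \<eta> \<Longrightarrow> dist (net_select \<eta> cs d y) y < \<eta>"
  by (induction cs) (auto simp: dist_commute)

lemma net_select_measurable: "net_select \<eta> cs d \<in> borel_measurable borel"
proof (induction cs)
  case (Cons c cs)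
  have "{y. dist y c < \<eta>} = ball c \<eta>" by (auto simp: ball_def dist_commute)
  then have "{y. dist y c < \<eta>} \<inter> space borel \<in> sets borel" by simp
  from measurable_If_set[OF measurable_const Cons this]
  show ?case by (simp add: fun_eq_iff)
qed simp

text \<open>A measurable map with values in a compact set is strongly measurable: follow finite
  1/(n+1)-nets of the compact set.\<close>
lemma strongly_measurable_compact_range:
  fixes u :: "'b \<Rightarrow> 'c::metric_space"
  assumes u: "u \<in> borel_measurable M" and C: "compact C" "u ` space M \<subseteq> C"
  shows "strongly_measurable M u"
proof -
  let ?r = "\<lambda>n::nat. inverse (real (Suc n))"
  have "\<exists>cs. set cs \<subseteq> C \<and> C \<subseteq> (\<Union>c\<in>set cs. ball c (?r n))" for n
  proof -
    obtain C' where C': "C' \<subseteq> C" "finite C'" "C \<subseteq> (\<Union>c\<in>C'. ball c (?r n))"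
      by (rule compactE_image[OF C(1), of C "\<lambda>c. ball c (?r n)"]) auto
    obtain cs where "set cs = C'" using finite_list[OF C'(2)] by blast
    then show ?thesis using C' by blast
  qed
  then have "\<exists>cs. \<forall>n. C \<subseteq> (\<Union>c\<in>set (cs n). ball c (?r n))"
    by (intro choice allI) blast
  then obtain cs where cs: "\<And>n. C \<subseteq> (\<Union>c\<in>set (cs n). ball c (?r n))"
    by blast
  \<comment> \<open>the default value is never used on space M, since u x lies in C\<close>
  define s where "s n x = net_select (?r n) (cs n) undefined (u x)" for n x
  have "simple_function M (s n)" for n
  proof (rule simple_function_borel_measurable)
    show "s n \<in> borel_measurable M"
      unfolding s_def using measurable_compose[OF u net_select_measurable] by simp
    show "finite (s n ` space M)"
      by (rule finite_subset[of _ "insert undefined (set (cs n))"])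
        (auto simp: s_def intro!: image_subsetI net_select_range)
  qed
  moreover have "(\<lambda>n. s n x) \<longlonglongrightarrow> u x" if x: "x \<in> space M" for x
  proof (rule metric_tendsto_imp_tendsto[OF LIMSEQ_inverse_real_of_nat], intro always_eventually allI)
    fix n
    have "u x \<in> (\<Union>c\<in>set (cs n). ball c (?r n))" using cs[of n] C(2) x by blast
    then have "\<exists>c\<in>set (cs n). dist (u x) c < ?r n" by (auto simp: dist_commute)
    then have "dist (s n x) (u x) < ?r n" unfolding s_def by (rule net_select_dist)
    then show "dist (s n x) (u x) \<le> dist (?r n) 0" by simp
  qed
  ultimately show ?thesis unfolding strongly_measurable_def by blast
qed

lemma infdist_almost_attained:
  fixes S :: "'b::metric_space set"
  assumes "S \<noteq> {}" "\<delta> > 0"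
  shows "\<exists>a. a \<in> S \<and> dist a c < infdist c S + \<delta>"
proof -
  have bdd: "bdd_below ((\<lambda>a. dist c a) ` S)" by (rule bdd_belowI[of _ 0]) auto
  have "(INF a\<in>S. dist c a) < infdist c S + \<delta>" using assms by (simp add: infdist_notempty)
  then obtain a where "a \<in> S" "dist c a < infdist c S + \<delta>"
    using cINF_less_iff[OF assms(1) bdd] by blast
  then show ?thesis by (auto simp: dist_commute)
qed

text \<open>A pointwise limit of simple functions with values in a set S (nonempty) is also a
  pointwise limit of S-valued simple functions: move each value to a nearly closest point
  of S, at distance less than 1/(n+1) beyond the distance to S.\<close>
lemma simple_approximation_in_set:
  fixes u :: "'b \<Rightarrow> 'c::metric_space"
  assumes s: "\<And>n. simple_function N (s n)" "\<And>x. x \<in> space N \<Longrightarrow> (\<lambda>n. s n x) \<longlonglongrightarrow> u x"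
    and uS: "\<And>x. x \<in> space N \<Longrightarrow> u x \<in> S" and S: "S \<noteq> {}"
  obtains t where "\<And>n. simple_function N (t n)" "\<And>n x. t n x \<in> S"
    "\<And>x. x \<in> space N \<Longrightarrow> (\<lambda>n. t n x) \<longlonglongrightarrow> u x"
proof -
  let ?r = "\<lambda>n::nat. inverse (real (Suc n))"
  define pk where "pk n c = (SOME a. a \<in> S \<and> dist a c < infdist c S + ?r n)" for n c
  have pk: "pk n c \<in> S \<and> dist (pk n c) c < infdist c S + ?r n" for n c
  proof -
    have "\<exists>a. a \<in> S \<and> dist a c < infdist c S + ?r n"
      using infdist_almost_attained[OF S, of "?r n" c] by auto
    then show ?thesis unfolding pk_def by (rule someI_ex)
  qed
  define t where "t n = pk n \<circ> s n" for n
  have ts: "simple_function N (t n)" for n unfolding t_def by (rule simple_function_compose[OF s(1)])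
  have tS: "t n x \<in> S" for n x using pk by (simp add: t_def)
  have tl: "(\<lambda>n. t n x) \<longlonglongrightarrow> u x" if x: "x \<in> space N" for x
  proof -
    have lim: "(\<lambda>n. 2 * dist (s n x) (u x) + ?r n) \<longlonglongrightarrow> 2 * dist (u x) (u x) + 0"
      using s(2)[OF x] by (intro tendsto_intros LIMSEQ_inverse_real_of_nat) auto
    show ?thesis
    proof (rule metric_tendsto_imp_tendsto[OF lim], intro always_eventually allI)
      fix n
      have "dist (t n x) (u x) \<le> dist (t n x) (s n x) + dist (s n x) (u x)" by (rule dist_triangle)
      also have "dist (t n x) (s n x) < infdist (s n x) S + ?r n" using pk by (simp add: t_def)
      also have "infdist (s n x) S \<le> dist (s n x) (u x)" by (rule infdist_le[OF uS[OF x]])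
      finally show "dist (t n x) (u x) \<le> dist (2 * dist (s n x) (u x) + ?r n) (2 * dist (u x) (u x) + 0)"
        by (simp add: dist_real_def)
    qed
  qed
  show ?thesis by (rule that[OF ts tS tl])
qed

text \<open>Approximating simple functions can be cut off at twice the norm of the limit: replace
  too large values by 0.  This provides the domination needed for dominated convergence.\<close>
lemma simple_approximation_cutoff:
  fixes u :: "'b \<Rightarrow> 'c::real_normed_vector"
  assumes t: "\<And>n. simple_function N (t n)" "\<And>x. x \<in> space N \<Longrightarrow> (\<lambda>n. t n x) \<longlonglongrightarrow> u x"
    and u: "u \<in> borel_measurable N"
  obtains w where "\<And>n. simple_function N (w n)" "\<And>n x. w n x \<in> insert 0 (range (t n))"
    "\<And>x. x \<in> space N \<Longrightarrow> (\<lambda>n. w n x) \<longlonglongrightarrow> u x" "\<And>n x. norm (w n x) \<le> 2 * norm (u x)"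
proof -
  define w where "w n x = (if norm (t n x) \<le> 2 * norm (u x) then t n x else 0)" for n x
  have ws: "simple_function N (w n)" for n
  proof (rule simple_function_borel_measurable)
    have tm: "t n \<in> borel_measurable N" by (rule borel_measurable_simple_function[OF t(1)])
    then have "{x \<in> space N. norm (t n x) \<le> 2 * norm (u x)} \<in> sets N"
      using u by measurable
    then show "w n \<in> borel_measurable N"
      unfolding w_def[abs_def] by (intro measurable_If tm measurable_const) auto
    have "w n ` space N \<subseteq> insert 0 (t n ` space N)" by (auto simp: w_def)
    then show "finite (w n ` space N)" using simple_functionD(1)[OF t(1)] finite_subset by blast
  qed
  have wr: "w n x \<in> insert 0 (range (t n))" for n x by (simp add: w_def)
  have wl: "(\<lambda>n. w n x) \<longlonglongrightarrow> u x" if x: "x \<in> space N" for x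
  proof (cases "u x = 0")
    case True
    then have "w n x = 0" for n by (simp add: w_def)
    then show ?thesis using True by simp
  next
    case False
    have "(\<lambda>n. norm (t n x)) \<longlonglongrightarrow> norm (u x)" using t(2)[OF x] by (rule tendsto_norm)
    moreover have "norm (u x) < 2 * norm (u x)" using False by simp
    ultimately have "eventually (\<lambda>n. norm (t n x) < 2 * norm (u x)) sequentially"
      by (rule order_tendstoD(2))
    then have "eventually (\<lambda>n. t n x = w n x) sequentially"
      by eventually_elim (simp add: w_def)
    then show ?thesis by (rule Lim_transform_eventually[OF t(2)[OF x]])
  qed
  have wb: "norm (w n x) \<le> 2 * norm (u x)" for n x by (simp add: w_def)
  show ?thesis by (rule that[OF ws wr wl wb])
qed

lemma strongly_measurable_dominated_approximation:
  fixes u :: "'b \<Rightarrow> 'c::real_normed_vector"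
  assumes u: "strongly_measurable N u" and uS: "\<And>x. x \<in> space N \<Longrightarrow> u x \<in> S" and S: "0 \<in> S"
  obtains w where "\<And>n. simple_function N (w n)" "\<And>n x. w n x \<in> S"
    "\<And>x. x \<in> space N \<Longrightarrow> (\<lambda>n. w n x) \<longlonglongrightarrow> u x" "\<And>n x. norm (w n x) \<le> 2 * norm (u x)"
proof -
  obtain s where s: "\<And>n. simple_function N (s n)" "\<And>x. x \<in> space N \<Longrightarrow> (\<lambda>n. s n x) \<longlonglongrightarrow> u x"
    using u unfolding strongly_measurable_def by blast
  obtain t where t: "\<And>n. simple_function N (t n)" "\<And>n x. t n x \<in> S"
    "\<And>x. x \<in> space N \<Longrightarrow> (\<lambda>n. t n x) \<longlonglongrightarrow> u x"
    using simple_approximation_in_set[OF s uS] S by blast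
  obtain w where w: "\<And>n. simple_function N (w n)" "\<And>n x. w n x \<in> insert 0 (range (t n))"
    "\<And>x. x \<in> space N \<Longrightarrow> (\<lambda>n. w n x) \<longlonglongrightarrow> u x" "\<And>n x. norm (w n x) \<le> 2 * norm (u x)"
    using simple_approximation_cutoff[OF t(1,3) strongly_measurable_imp_borel[OF u]] by blast
  have "w n x \<in> S" for n x using w(2)[of n x] t(2) S by auto
  then show ?thesis using that w(1,3,4) by blast
qed

lemma simple_function_sum_repr:
  fixes \<phi> :: "'c \<Rightarrow> 'b \<Rightarrow> 'd::real_normed_vector"
  assumes "simple_function N v" "x \<in> space N"
  shows "\<phi> (v x) x = (\<Sum>c\<in>v ` space N. indicator {y\<in>space N. v y = c} x *\<^sub>R \<phi> c x)"
proof -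
  have "(\<Sum>c\<in>v ` space N. indicator {y\<in>space N. v y = c} x *\<^sub>R \<phi> c x)
      = (\<Sum>c\<in>v ` space N. if v x = c then \<phi> c x else 0)"
    using assms(2) by (intro sum.cong) (auto split: split_indicator)
  also have "\<dots> = \<phi> (v x) x" using assms simple_functionD(1)[OF assms(1)] by (simp add: sum.delta)
  finally show ?thesis by simp
qed

lemma simple_function_sum_repr_nonzero:
  fixes \<phi> :: "'c::zero \<Rightarrow> 'b \<Rightarrow> 'd::real_normed_vector"
  assumes "simple_function N v" "x \<in> space N" "\<phi> 0 x = 0"
  shows "\<phi> (v x) x = (\<Sum>c\<in>v ` space N - {0}. indicator {y\<in>space N. v y = c} x *\<^sub>R \<phi> c x)"
proof -
  have "(\<Sum>c\<in>v ` space N - {0}. indicator {y\<in>space N. v y = c} x *\<^sub>R \<phi> c x)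
      = (\<Sum>c\<in>v ` space N. indicator {y\<in>space N. v y = c} x *\<^sub>R \<phi> c x)"
    using assms(3) simple_functionD(1)[OF assms(1)]
    by (intro sum.mono_neutral_left) (auto split: split_indicator)
  then show ?thesis using simple_function_sum_repr[OF assms(1,2)] by simp
qed

lemma measurable_simple_substitution:
  fixes \<phi> :: "'c \<Rightarrow> 'b \<Rightarrow> 'd::{real_normed_vector, second_countable_topology}"
  assumes "simple_function N v" "\<And>c. c \<in> v ` space N \<Longrightarrow> \<phi> c \<in> borel_measurable N"
  shows "(\<lambda>x. \<phi> (v x) x) \<in> borel_measurable N"
proof -
  have "(\<lambda>x. \<Sum>c\<in>v ` space N. indicator {y\<in>space N. v y = c} x *\<^sub>R \<phi> c x) \<in> borel_measurable N"
  proof (intro borel_measurable_sum borel_measurable_scaleR borel_measurable_indicator assms(2))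
    fix c assume "c \<in> v ` space N"
    have "{y\<in>space N. v y = c} = v -` {c} \<inter> space N" by auto
    then show "{y\<in>space N. v y = c} \<in> sets N" using simple_functionD(2)[OF assms(1)] by simp
  qed
  then show ?thesis
    by (rule measurable_cong[THEN iffD1, rotated]) (simp add: simple_function_sum_repr[OF assms(1)])
qed

lemma measurable_limit_substitution:
  fixes \<phi> :: "'c::metric_space \<Rightarrow> 'b \<Rightarrow> 'd::{real_normed_vector, second_countable_topology}"
  assumes w: "\<And>n. simple_function N (w n)" "\<And>x. x \<in> space N \<Longrightarrow> (\<lambda>n. w n x) \<longlonglongrightarrow> u x"
      "\<And>n x. x \<in> space N \<Longrightarrow> w n x \<in> S" "\<And>x. x \<in> space N \<Longrightarrow> u x \<in> S"
    and \<phi>: "\<And>c. c \<in> S \<Longrightarrow> \<phi> c \<in> borel_measurable N"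
      "\<And>x c c'. x \<in> space N \<Longrightarrow> c \<in> S \<Longrightarrow> c' \<in> S \<Longrightarrow> dist (\<phi> c x) (\<phi> c' x) \<le> dist c c'"
  shows "(\<lambda>x. \<phi> (u x) x) \<in> borel_measurable N"
proof (rule borel_measurable_LIMSEQ_metric)
  show "(\<lambda>x. \<phi> (w n x) x) \<in> borel_measurable N" for n
  proof (rule measurable_simple_substitution[OF w(1)])
    show "\<And>c. c \<in> w n ` space N \<Longrightarrow> \<phi> c \<in> borel_measurable N" using w(3) \<phi>(1) by blast
  qed
  fix x assume x: "x \<in> space N"
  show "(\<lambda>n. \<phi> (w n x) x) \<longlonglongrightarrow> \<phi> (u x) x"
  proof (rule metric_tendsto_imp_tendsto[OF w(2)[OF x]])
    show "\<forall>\<^sub>F n in sequentially. dist (\<phi> (w n x) x) (\<phi> (u x) x) \<le> dist (w n x) (u x)"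
      using x w(3,4) \<phi>(2) by (simp add: always_eventually)
  qed
qed

section \<open>The mean value on a closed subspace of Pi-infinity\<close>

locale homogenization_setting =
  fixes E :: "real set" and mul :: "real \<Rightarrow> real \<Rightarrow> real" and e :: real
    and H :: "real \<Rightarrow> 'a::{t2_space,first_countable_topology} \<Rightarrow> 'a"
    and lam :: "'a measure" and \<Omega> :: "'a set" and A :: "('a \<Rightarrow>\<^sub>C complex) set"
  assumes hom: "homogenizer E mul e H lam"
    and \<Omega>_open: "open \<Omega>"
    and A_subspace: "closed_complex_subspace A" and A_Pi_inf: "A \<subseteq> Pi_inf E H lam"
begin

abbreviation "F \<equiv> to_theta E"
abbreviation "Mv \<equiv> mean_value E H lam"
abbreviation "lam\<Omega> \<equiv> restrict_space lam \<Omega>"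

lemma sets_lam: "sets lam = sets borel"
  using hom by (simp add: homogenizer_def radon_measure_def)

lemma space_lam [simp]: "space lam = UNIV"
  using sets_eq_imp_space_eq[OF sets_lam] by simp

lemma space_lam\<Omega> [simp]: "space lam\<Omega> = \<Omega>"
  by (simp add: space_restrict_space)

lemma \<Omega>_sets: "\<Omega> \<in> sets lam"
  using sets_lam \<Omega>_open by simp

text \<open>E contains the positive integers, so the filter eps -> theta is proper.\<close>
lemma E_nonempty: "E \<noteq> {}"
proof -
  have "real 1 \<in> E" using hom unfolding homogenizer_def R_group_def by blast
  then show ?thesis by blast
qed

lemma F_nontrivial: "F \<noteq> bot"
  by (rule to_theta_nontrivial[OF E_nonempty])

lemma eventually_in_E: "eventually (\<lambda>\<epsilon>. \<epsilon> \<in> E) F"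
  by (rule eventually_to_theta_in[OF E_nonempty])

lemma H_continuous: "\<epsilon> \<in> E \<Longrightarrow> continuous_on UNIV (H \<epsilon>)"
proof -
  assume \<epsilon>: "\<epsilon> \<in> E"
  have c: "continuous_on (E \<times> UNIV) (\<lambda>(\<epsilon>, x). H \<epsilon> x)" using hom by (simp add: homogenizer_def)
  have "continuous_on UNIV ((\<lambda>(\<epsilon>, x). H \<epsilon> x) \<circ> (\<lambda>x. (\<epsilon>, x)))"
    by (rule continuous_on_compose) (auto intro!: continuous_intros continuous_on_subset[OF c] simp: \<epsilon>)
  then show ?thesis by (simp add: o_def)
qed

lemma measurable_shift: "\<epsilon> \<in> E \<Longrightarrow> (\<lambda>x. apply_bcontfun a (H \<epsilon> x)) \<in> borel_measurable lam"
  using continuous_on_compose2[OF continuous_on_apply_bcontfun H_continuous]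
    borel_measurable_continuous_onI measurable_cong_sets[OF sets_lam refl]
  by blast

lemma measurable_shift_lam\<Omega>: "\<epsilon> \<in> E \<Longrightarrow> (\<lambda>x. apply_bcontfun a (H \<epsilon> x)) \<in> borel_measurable lam\<Omega>"
  by (rule measurable_restrict_space1, rule measurable_shift)

text \<open>lambda is nontrivial and Radon, so some set has finite positive measure.\<close>
lemma finite_positive_set:
  obtains K where "K \<in> sets lam" "0 < measure lam K" "emeasure lam K < \<infinity>"
proof -
  have radon: "radon_measure lam" using hom by (simp add: homogenizer_def)
  have finite: "\<forall>K. compact K \<longrightarrow> emeasure lam K < \<infinity>"
    using radon unfolding radon_measure_def by (elim conjE)
  have inner: "\<forall>U. open U \<longrightarrow> emeasure lam U = (SUP K\<in>{K. compact K \<and> K \<subseteq> U}. emeasure lam K)"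
    using radon unfolding radon_measure_def by (elim conjE)
  have "\<exists>B\<in>sets lam. emeasure lam B \<noteq> 0" using hom unfolding homogenizer_def by (elim conjE)
  then obtain B where B: "B \<in> sets lam" "emeasure lam B \<noteq> 0" by blast
  have "emeasure lam B \<le> emeasure lam UNIV"
    using B by (intro emeasure_mono) (auto simp: sets_lam)
  also have "\<dots> = (SUP K\<in>{K. compact K \<and> K \<subseteq> UNIV}. emeasure lam K)"
    using inner by blast
  finally have "0 < (SUP K\<in>{K. compact K \<and> K \<subseteq> UNIV}. emeasure lam K)"
    using B(2) by (metis order_less_le_trans not_gr_zero)
  then obtain K where K: "compact K" "0 < emeasure lam K" by (auto simp: less_SUP_iff)
  have fin: "emeasure lam K < \<infinity>" using finite K(1) by blast
  have "K \<in> sets lam" using K(1) by (simp add: sets_lam compact_imp_closed)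
  moreover have "0 < measure lam K" using K fin by (simp add: measure_def enn2real_positive_iff)
  ultimately show ?thesis using that fin by blast
qed

lemma indicator_test:
  assumes "K \<in> sets lam" "emeasure lam K < \<infinity>"
  shows "integrable lam (\<lambda>x. indicator K x *\<^sub>R (1::complex))"
    and "(LINT x|lam. indicator K x *\<^sub>R (1::complex) * c) = measure lam K *\<^sub>R c"
proof -
  have ii: "integrable lam (indicator K :: _ \<Rightarrow> real)"
    using assms by (simp add: integrable_indicator_iff)
  then show "integrable lam (\<lambda>x. indicator K x *\<^sub>R (1::complex))" by (rule integrable_scaleR_left)
  have "(LINT x|lam. indicator K x *\<^sub>R (1::complex) * c) = (LINT x|lam. indicator K x *\<^sub>R c)"
    by (simp add: scaleR_conv_of_real)
  also have "\<dots> = (LINT x|lam. indicator K x) *\<^sub>R c" using ii by (rule integral_scaleR_left)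
  finally show "(LINT x|lam. indicator K x *\<^sub>R (1::complex) * c) = measure lam K *\<^sub>R c"
    using assms(1) by simp
qed

text \<open>Weak-* limits of constants are unique: test against an indicator.\<close>
lemma wstar_const_unique:
  assumes "wstar_tendsto lam f (\<lambda>_. c1) F" "wstar_tendsto lam f (\<lambda>_. c2) F"
  shows "c1 = c2"
proof -
  obtain K where K: "K \<in> sets lam" "0 < measure lam K" "emeasure lam K < \<infinity>"
    by (rule finite_positive_set)
  note test = indicator_test[OF K(1,3)]
  have lim: "((\<lambda>\<epsilon>. LINT x|lam. indicator K x *\<^sub>R 1 * f \<epsilon> x) \<longlongrightarrow> measure lam K *\<^sub>R c) F"
    if "wstar_tendsto lam f (\<lambda>_. c) F" for c
    using that[unfolded wstar_tendsto_def, rule_format, OF test(1)] unfolding test(2) .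
  have "measure lam K *\<^sub>R c1 = measure lam K *\<^sub>R c2"
    by (rule tendsto_unique[OF F_nontrivial lim[OF assms(1)] lim[OF assms(2)]])
  then show ?thesis using K(2) by simp
qed

lemma wstar_mean_value:
  assumes "a \<in> A"
  shows "wstar_tendsto lam (\<lambda>\<epsilon> x. apply_bcontfun a (H \<epsilon> x)) (\<lambda>_. Mv a) F"
proof -
  obtain c where c: "wstar_tendsto lam (\<lambda>\<epsilon> x. apply_bcontfun a (H \<epsilon> x)) (\<lambda>_. c) F"
    using assms A_Pi_inf unfolding Pi_inf_def by blast
  have "Mv a = c"
    unfolding mean_value_def
  proof (rule the_equality)
    fix c' assume "wstar_tendsto lam (\<lambda>\<epsilon> x. apply_bcontfun a (H \<epsilon> x)) (\<lambda>_. c') F"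
    then show "c' = c" by (rule wstar_const_unique[OF _ c])
  qed (rule c)
  then show ?thesis using c by simp
qed

lemma wstar_mean_value_lam\<Omega>:
  assumes "a \<in> A" "integrable lam\<Omega> g"
  shows "((\<lambda>\<epsilon>. LINT x|lam\<Omega>. g x * apply_bcontfun a (H \<epsilon> x)) \<longlongrightarrow> (LINT x|lam\<Omega>. g x * Mv a)) F"
proof -
  have \<Omega>: "\<Omega> \<inter> space lam \<in> sets lam" using \<Omega>_sets by simp
  have gi: "integrable lam (\<lambda>x. indicator \<Omega> x *\<^sub>R g x)"
    using assms(2) integrable_restrict_space[OF \<Omega>] by blast
  have eq: "(LINT x|lam\<Omega>. g x * c x) = (LINT x|lam. indicator \<Omega> x *\<^sub>R g x * c x)" for c
    by (subst integral_restrict_space[OF \<Omega>]) (simp add: scaleR_conv_of_real mult.assoc)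
  show ?thesis
    unfolding eq using wstar_mean_value[OF assms(1)] gi unfolding wstar_tendsto_def by blast
qed

lemma A_zero: "0 \<in> A"
  using A_subspace by (simp add: closed_complex_subspace_def)

lemma A_diff: assumes "a \<in> A" "b \<in> A" shows "a - b \<in> A"
proof -
  obtain v where v: "v \<in> A" "\<And>y. apply_bcontfun v y = (-1) * apply_bcontfun b y"
    using A_subspace assms(2) unfolding closed_complex_subspace_def by blast
  have "v = - b" by (rule bcontfun_eqI) (simp add: v)
  then have "a + - b \<in> A"
    using A_subspace assms(1) v(1) unfolding closed_complex_subspace_def by blast
  then show ?thesis by simp
qed

lemma mean_value_zero: "Mv 0 = 0"
  by (rule wstar_const_unique[OF wstar_mean_value[OF A_zero]]) (simp add: wstar_tendsto_def)

lemma mean_value_diff: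
  assumes "a \<in> A" "b \<in> A"
  shows "Mv (a - b) = Mv a - Mv b"
proof (rule wstar_const_unique[OF wstar_mean_value[OF A_diff[OF assms]]])
  show "wstar_tendsto lam (\<lambda>\<epsilon> x. apply_bcontfun (a - b) (H \<epsilon> x)) (\<lambda>_. Mv a - Mv b) F"
    unfolding wstar_tendsto_def
  proof (intro allI impI)
    fix g :: "'a \<Rightarrow> complex" assume g: "integrable lam g"
    have shift: "integrable lam (\<lambda>x. g x * apply_bcontfun c (H \<epsilon> x))" if "\<epsilon> \<in> E" for c \<epsilon>
      by (rule integrable_mult_bounded[OF g measurable_shift[OF that] norm_bounded])
    have lim: "((\<lambda>\<epsilon>. (LINT x|lam. g x * apply_bcontfun a (H \<epsilon> x)) - (LINT x|lam. g x * apply_bcontfun b (H \<epsilon> x)))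
       \<longlongrightarrow> (LINT x|lam. g x * Mv a) - (LINT x|lam. g x * Mv b)) F"
      using wstar_mean_value[OF assms(1)] wstar_mean_value[OF assms(2)] g
      unfolding wstar_tendsto_def by (intro tendsto_diff) auto
    have ev: "eventually (\<lambda>\<epsilon>. (LINT x|lam. g x * apply_bcontfun a (H \<epsilon> x))
        - (LINT x|lam. g x * apply_bcontfun b (H \<epsilon> x))
        = (LINT x|lam. g x * apply_bcontfun (a - b) (H \<epsilon> x))) F"
      using eventually_in_E
    proof eventually_elim
      case (elim \<epsilon>)
      then show ?case using shift[OF elim, of a] shift[OF elim, of b] by (simp add: right_diff_distrib)
    qed
    have "(LINT x|lam. g x * Mv a) - (LINT x|lam. g x * Mv b) = (LINT x|lam. g x * (Mv a - Mv b))"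
      using g by (simp add: right_diff_distrib)
    with Lim_transform_eventually[OF lim ev]
    show "((\<lambda>\<epsilon>. LINT x|lam. g x * apply_bcontfun (a - b) (H \<epsilon> x))
        \<longlongrightarrow> (LINT x|lam. g x * (Mv a - Mv b))) F" by simp
  qed
qed

lemma mean_value_norm_le:
  assumes "a \<in> A"
  shows "norm (Mv a) \<le> norm a"
proof -
  obtain K where K: "K \<in> sets lam" "0 < measure lam K" "emeasure lam K < \<infinity>"
    by (rule finite_positive_set)
  note test = indicator_test[OF K(1,3)]
  let ?I = "\<lambda>\<epsilon>. LINT x|lam. indicator K x *\<^sub>R 1 * apply_bcontfun a (H \<epsilon> x)"
  have lim: "((\<lambda>\<epsilon>. norm (?I \<epsilon>)) \<longlongrightarrow> norm (measure lam K *\<^sub>R Mv a)) F"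
    using tendsto_norm[OF wstar_mean_value[OF assms, unfolded wstar_tendsto_def, rule_format, OF test(1)]]
    unfolding test(2) .
  have "eventually (\<lambda>\<epsilon>. norm (?I \<epsilon>) \<le> measure lam K * norm a) F"
    using eventually_in_E
  proof eventually_elim
    case (elim \<epsilon>)
    have "norm (?I \<epsilon>) \<le> (LINT x|lam. norm (indicator K x *\<^sub>R 1 * apply_bcontfun a (H \<epsilon> x)))"
      by (rule integral_norm_bound)
    also have "\<dots> \<le> (LINT x|lam. indicator K x * norm a)"
    proof (rule integral_mono)
      show "integrable lam (\<lambda>x. norm (indicator K x *\<^sub>R 1 * apply_bcontfun a (H \<epsilon> x)))"
        by (intro integrable_norm integrable_mult_bounded[OF test(1) measurable_shift[OF elim] norm_bounded])
      show "integrable lam (\<lambda>x. indicator K x * norm a)"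
        using K(1,3) by (simp add: integrable_indicator_iff)
    qed (simp add: norm_bounded split: split_indicator)
    also have "\<dots> = measure lam K * norm a" using K(1) by simp
    finally show ?case .
  qed
  then have "norm (measure lam K *\<^sub>R Mv a) \<le> measure lam K * norm a"
    by (rule tendsto_upperbound[OF lim _ F_nontrivial])
  then show ?thesis using K(2) by simp
qed

lemma mean_value_dist: "a \<in> A \<Longrightarrow> b \<in> A \<Longrightarrow> dist (Mv a) (Mv b) \<le> dist a b"
  using mean_value_norm_le[OF A_diff] mean_value_diff by (simp add: dist_norm)

text \<open>If u is the pointwise limit of A-valued simple functions w_n, the maps entering the
  convergence statement are measurable, because c |-> c(H(eps) x) and the mean value are
  1-Lipschitz on A.\<close>
lemma approximant_measurability:
  assumes w: "\<And>n. simple_function lam\<Omega> (w n)" "\<And>n x. w n x \<in> A"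
      "\<And>x. x \<in> \<Omega> \<Longrightarrow> (\<lambda>n. w n x) \<longlonglongrightarrow> u x"
    and uA: "\<And>x. x \<in> \<Omega> \<Longrightarrow> u x \<in> A"
  shows measurable_oscillation: "\<epsilon> \<in> E \<Longrightarrow> (\<lambda>x. apply_bcontfun (u x) (H \<epsilon> x)) \<in> borel_measurable lam\<Omega>"
    and measurable_mean: "(\<lambda>x. Mv (u x)) \<in> borel_measurable lam\<Omega>"
    and measurable_error: "(\<lambda>x. dist (u x) (w n x)) \<in> borel_measurable lam\<Omega>"
proof -
  show "\<epsilon> \<in> E \<Longrightarrow> (\<lambda>x. apply_bcontfun (u x) (H \<epsilon> x)) \<in> borel_measurable lam\<Omega>"
    by (rule measurable_limit_substitution[where w=w and S=A])
      (use w uA in \<open>auto simp: measurable_shift_lam\<Omega> dist_bounded\<close>)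
  show "(\<lambda>x. Mv (u x)) \<in> borel_measurable lam\<Omega>"
    by (rule measurable_limit_substitution[where w=w and S=A]) (use w uA in \<open>auto simp: mean_value_dist\<close>)
  have um: "u \<in> borel_measurable lam\<Omega>"
    by (rule borel_measurable_LIMSEQ_metric[OF borel_measurable_simple_function[OF w(1)]]) (use w(3) in simp)
  have "(\<lambda>x. dist (u x) c) \<in> borel_measurable lam\<Omega>" for c
    using measurable_compose[OF um borel_measurable_continuous_onI[OF continuous_on_dist[OF continuous_on_id continuous_on_const]]]
    by simp
  then show "(\<lambda>x. dist (u x) (w n x)) \<in> borel_measurable lam\<Omega>"
    using measurable_simple_substitution[OF w(1), where \<phi>="\<lambda>c x. dist (u x) c"] by blast
qed

subsection \<open>Convergence for simple functions\<close>

text \<open>For an A-valued simple function v the statement is a finite sum of defining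
  convergences of the mean value, one for each nonzero value c of v, tested against g
  restricted to the level set {v = c}.\<close>
lemma mean_convergence_simple:
  assumes v: "simple_function lam\<Omega> v" "\<And>x. x \<in> \<Omega> \<Longrightarrow> v x \<in> A"
    and g: "g \<in> borel_measurable lam\<Omega>"
    and level: "\<And>c. c \<in> v ` \<Omega> \<Longrightarrow> c \<noteq> 0 \<Longrightarrow>
      integrable lam\<Omega> (\<lambda>x. indicator {y\<in>\<Omega>. v y = c} x *\<^sub>R g x)"
  shows mean_convergence_simple_integrable:
      "\<epsilon> \<in> E \<Longrightarrow> integrable lam\<Omega> (\<lambda>x. g x * apply_bcontfun (v x) (H \<epsilon> x))"
    and mean_convergence_simple_integrable_mean: "integrable lam\<Omega> (\<lambda>x. g x * Mv (v x))"
    and mean_convergence_simple_tendsto: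
      "((\<lambda>\<epsilon>. LINT x|lam\<Omega>. g x * apply_bcontfun (v x) (H \<epsilon> x)) \<longlongrightarrow> (LINT x|lam\<Omega>. g x * Mv (v x))) F"
proof -
  define R where "R = v ` \<Omega> - {0}"
  define gc where "gc c x = indicator {y\<in>\<Omega>. v y = c} x *\<^sub>R g x" for c x
  have R: "finite R" "\<And>c. c \<in> R \<Longrightarrow> c \<in> A"
    using simple_functionD(1)[OF v(1)] v(2) by (auto simp: R_def)
  have gc: "integrable lam\<Omega> (gc c)" if "c \<in> R" for c
    using level that unfolding R_def gc_def by blast
  have repr: "g x * \<phi> (v x) x = (\<Sum>c\<in>R. gc c x * \<phi> c x)"
    if "x \<in> \<Omega>" "\<phi> 0 x = 0" for \<phi> :: "_ \<Rightarrow> _ \<Rightarrow> complex" and x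
    using simple_function_sum_repr_nonzero[OF v(1), where \<phi>="\<lambda>c x. g x * \<phi> c x"] that
    by (simp add: R_def gc_def scaleR_conv_of_real mult.assoc)
  let ?osc = "\<lambda>\<epsilon> c x. apply_bcontfun c (H \<epsilon> x)" and ?mean = "\<lambda>c x. Mv c"
  have osc_int: "integrable lam\<Omega> (\<lambda>x. gc c x * ?osc \<epsilon> c x)" if "c \<in> R" "\<epsilon> \<in> E" for c \<epsilon>
    by (rule integrable_mult_bounded[OF gc[OF that(1)] measurable_shift_lam\<Omega>[OF that(2)] norm_bounded])
  have mean_int: "integrable lam\<Omega> (\<lambda>x. gc c x * ?mean c x)" if "c \<in> R" for c
    using gc[OF that] by simp
  have osc_repr: "\<And>x. x \<in> space lam\<Omega> \<Longrightarrow> g x * ?osc \<epsilon> (v x) x = (\<Sum>c\<in>R. gc c x * ?osc \<epsilon> c x)"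
    for \<epsilon> by (rule repr) simp_all
  have mean_repr: "\<And>x. x \<in> space lam\<Omega> \<Longrightarrow> g x * ?mean (v x) x = (\<Sum>c\<in>R. gc c x * ?mean c x)"
    by (rule repr) (simp_all add: mean_value_zero)
  have osc_sum: "integrable lam\<Omega> (\<lambda>x. g x * ?osc \<epsilon> (v x) x)"
    "(LINT x|lam\<Omega>. g x * ?osc \<epsilon> (v x) x) = (\<Sum>c\<in>R. LINT x|lam\<Omega>. gc c x * ?osc \<epsilon> c x)"
    if "\<epsilon> \<in> E" for \<epsilon>
    using integral_sum_representation[OF osc_int[OF _ that] osc_repr] by blast+
  have mean_sum: "integrable lam\<Omega> (\<lambda>x. g x * Mv (v x))"
    "(LINT x|lam\<Omega>. g x * Mv (v x)) = (\<Sum>c\<in>R. LINT x|lam\<Omega>. gc c x * Mv c)"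
    using integral_sum_representation[OF mean_int mean_repr] by simp_all
  show "\<epsilon> \<in> E \<Longrightarrow> integrable lam\<Omega> (\<lambda>x. g x * apply_bcontfun (v x) (H \<epsilon> x))"
    using osc_sum(1) by simp
  show "integrable lam\<Omega> (\<lambda>x. g x * Mv (v x))"
    using mean_sum(1) by simp
  have "((\<lambda>\<epsilon>. \<Sum>c\<in>R. LINT x|lam\<Omega>. gc c x * ?osc \<epsilon> c x) \<longlongrightarrow> (\<Sum>c\<in>R. LINT x|lam\<Omega>. gc c x * ?mean c x)) F"
    by (rule tendsto_sum) (rule wstar_mean_value_lam\<Omega>[OF R(2) gc])
  moreover have "eventually (\<lambda>\<epsilon>. (\<Sum>c\<in>R. LINT x|lam\<Omega>. gc c x * ?osc \<epsilon> c x)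
      = (LINT x|lam\<Omega>. g x * ?osc \<epsilon> (v x) x)) F"
    using eventually_in_E by eventually_elim (simp add: osc_sum(2))
  ultimately show "((\<lambda>\<epsilon>. LINT x|lam\<Omega>. g x * apply_bcontfun (v x) (H \<epsilon> x)) \<longlongrightarrow> (LINT x|lam\<Omega>. g x * Mv (v x))) F"
    unfolding mean_sum(2) by (rule Lim_transform_eventually)
qed

subsection \<open>Convergence by approximation\<close>

text \<open>Passage from the approximants w_n to u: since c |-> c(H(eps) x) and the mean value are
  1-Lipschitz, the errors on both sides are bounded by int |g| dist(u, w_n), uniformly in
  eps, and this bound tends to 0.\<close>
lemma mean_convergence_approximants:
  assumes w: "\<And>n. simple_function lam\<Omega> (w n)" "\<And>n x. w n x \<in> A"
      "\<And>x. x \<in> \<Omega> \<Longrightarrow> (\<lambda>n. w n x) \<longlonglongrightarrow> u x" "\<And>n x. norm (w n x) \<le> 2 * norm (u x)"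
    and uA: "\<And>x. x \<in> \<Omega> \<Longrightarrow> u x \<in> A"
    and g: "g \<in> borel_measurable lam\<Omega>" "integrable lam\<Omega> (\<lambda>x. norm (g x) * norm (u x))"
    and level: "\<And>n c. c \<in> w n ` \<Omega> \<Longrightarrow> c \<noteq> 0 \<Longrightarrow>
      integrable lam\<Omega> (\<lambda>x. indicator {y\<in>\<Omega>. w n y = c} x *\<^sub>R g x)"
  shows "((\<lambda>\<epsilon>. LINT x|lam\<Omega>. g x * apply_bcontfun (u x) (H \<epsilon> x)) \<longlongrightarrow> (LINT x|lam\<Omega>. g x * Mv (u x))) F"
proof -
  have osc: "integrable lam\<Omega> (\<lambda>x. g x * apply_bcontfun (u x) (H \<epsilon> x))" if "\<epsilon> \<in> E" for \<epsilon>
  proof (rule Bochner_Integration.integrable_bound[OF g(2)])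
    show "(\<lambda>x. g x * apply_bcontfun (u x) (H \<epsilon> x)) \<in> borel_measurable lam\<Omega>"
      using g(1) measurable_oscillation[OF w(1-3) uA that] by (rule borel_measurable_times)
  qed (simp add: norm_mult mult_left_mono norm_bounded)
  have mean: "integrable lam\<Omega> (\<lambda>x. g x * Mv (u x))"
  proof (rule Bochner_Integration.integrable_bound[OF g(2)])
    show "(\<lambda>x. g x * Mv (u x)) \<in> borel_measurable lam\<Omega>"
      using g(1) measurable_mean[OF w(1-3) uA] by (rule borel_measurable_times)
  qed (intro AE_I2, simp add: norm_mult mult_left_mono mean_value_norm_le uA)
  note err = dominated_approximation_error[OF w(3,4) measurable_error[OF w(1-3) uA] g]
  show "((\<lambda>\<epsilon>. LINT x|lam\<Omega>. g x * apply_bcontfun (u x) (H \<epsilon> x)) \<longlongrightarrow> (LINT x|lam\<Omega>. g x * Mv (u x))) F"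
  proof (rule tendsto_uniform_approximation)
    fix \<eta> :: real assume "\<eta> > 0"
    then have "eventually (\<lambda>n. dist (LINT x|lam\<Omega>. norm (g x) * dist (u x) (w n x)) 0 < \<eta>) sequentially"
      using tendstoD[OF err(2)] by simp
    then obtain n where n: "(LINT x|lam\<Omega>. norm (g x) * dist (u x) (w n x)) \<le> \<eta>"
      unfolding eventually_sequentially dist_real_def by (metis abs_less_iff diff_zero less_eq_real_def order_refl)
    have simple_osc: "integrable lam\<Omega> (\<lambda>x. g x * apply_bcontfun (w n x) (H \<epsilon> x))" if "\<epsilon> \<in> E" for \<epsilon>
      by (rule mean_convergence_simple_integrable[where v="w n"]) (use w(1,2) g(1) level that in auto)
    have simple_mean: "integrable lam\<Omega> (\<lambda>x. g x * Mv (w n x))"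
      by (rule mean_convergence_simple_integrable_mean[where v="w n"]) (use w(1,2) g(1) level in auto)
    have simple_lim: "((\<lambda>\<epsilon>. LINT x|lam\<Omega>. g x * apply_bcontfun (w n x) (H \<epsilon> x))
        \<longlongrightarrow> (LINT x|lam\<Omega>. g x * Mv (w n x))) F"
      by (rule mean_convergence_simple_tendsto[where v="w n"]) (use w(1,2) g(1) level in auto)
    have "eventually (\<lambda>\<epsilon>. norm ((LINT x|lam\<Omega>. g x * apply_bcontfun (u x) (H \<epsilon> x))
        - (LINT x|lam\<Omega>. g x * apply_bcontfun (w n x) (H \<epsilon> x))) \<le> \<eta>) F"
      using eventually_in_E
    proof eventually_elim
      case (elim \<epsilon>)
      show ?case
        using integral_mult_diff_bound[OF osc[OF elim] simple_osc[OF elim] err(1)[of n]] n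
        by (simp add: dist_norm[symmetric] dist_bounded)
    qed
    moreover have "norm ((LINT x|lam\<Omega>. g x * Mv (u x)) - (LINT x|lam\<Omega>. g x * Mv (w n x))) \<le> \<eta>"
      using integral_mult_diff_bound[OF mean simple_mean err(1)[of n]] n
      by (simp add: dist_norm[symmetric] mean_value_dist uA w(2))
    ultimately show "\<exists>fa La. (fa \<longlongrightarrow> La) F \<and>
        eventually (\<lambda>\<epsilon>. norm ((LINT x|lam\<Omega>. g x * apply_bcontfun (u x) (H \<epsilon> x)) - fa \<epsilon>) \<le> \<eta>) F \<and>
        norm ((LINT x|lam\<Omega>. g x * Mv (u x)) - La) \<le> \<eta>"
      using simple_lim by blast
  qed
qed

lemma mean_convergence:
  assumes u: "strongly_measurable lam\<Omega> u" "\<And>x. x \<in> \<Omega> \<Longrightarrow> u x \<in> A"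
    and g: "g \<in> borel_measurable lam\<Omega>" "integrable lam\<Omega> (\<lambda>x. norm (g x) * norm (u x))"
    and level: "\<And>r. r > 0 \<Longrightarrow> integrable lam\<Omega> (\<lambda>x. indicator {x\<in>\<Omega>. r \<le> norm (u x)} x *\<^sub>R g x)"
  shows "((\<lambda>\<epsilon>. LINT x|lam\<Omega>. g x * apply_bcontfun (u x) (H \<epsilon> x)) \<longlongrightarrow> (LINT x|lam\<Omega>. g x * Mv (u x))) F"
proof -
  obtain w where w: "\<And>n. simple_function lam\<Omega> (w n)" "\<And>n x. w n x \<in> A"
    "\<And>x. x \<in> \<Omega> \<Longrightarrow> (\<lambda>n. w n x) \<longlonglongrightarrow> u x" "\<And>n x. norm (w n x) \<le> 2 * norm (u x)"
    using strongly_measurable_dominated_approximation[OF u(1) _ A_zero] u(2) by auto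
  \<comment> \<open>a level set {w_n = c} with c \<noteq> 0 lies in {||u|| >= ||c||/2}\<close>
  have w_level: "integrable lam\<Omega> (\<lambda>x. indicator {y\<in>\<Omega>. w n y = c} x *\<^sub>R g x)"
    if "c \<noteq> 0" for n c
  proof -
    let ?B = "{y\<in>\<Omega>. w n y = c}" and ?L = "{x\<in>\<Omega>. norm c / 2 \<le> norm (u x)}"
    have "?B = w n -` {c} \<inter> space lam\<Omega>" by auto
    then have B: "?B \<in> sets lam\<Omega>"
      using measurable_sets[OF borel_measurable_simple_function[OF w(1)], of "{c}" n] by simp
    have "integrable lam\<Omega> (\<lambda>x. indicator ?B x *\<^sub>R (indicator ?L x *\<^sub>R g x))"
      using that by (intro integrable_mult_indicator[OF B] level) simp
    moreover have "(\<lambda>x. indicator ?B x *\<^sub>R (indicator ?L x *\<^sub>R g x)) = (\<lambda>x. indicator ?B x *\<^sub>R g x)"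
      by (rule ext) (use w(4)[of n] in \<open>fastforce split: split_indicator simp: mult.commute\<close>)
    ultimately show ?thesis by (simp only:)
  qed
  show ?thesis by (rule mean_convergence_approximants[OF w u(2) g w_level])
qed

lemma compact_support_convergence:
  assumes u: "u \<in> Kc_vec \<Omega> A"
  shows "wstar_tendsto lam\<Omega> (\<lambda>\<epsilon> x. apply_bcontfun (u x) (H \<epsilon> x)) (\<lambda>x. Mv (u x)) F"
  unfolding wstar_tendsto_def
proof (intro allI impI)
  fix g :: "'a \<Rightarrow> complex" assume g: "integrable lam\<Omega> g"
  obtain K where K: "compact K" "K \<subseteq> \<Omega>" "\<And>x. x \<in> \<Omega> - K \<Longrightarrow> u x = 0"
    using u unfolding Kc_vec_def by blast
  have uA: "\<And>x. x \<in> \<Omega> \<Longrightarrow> u x \<in> A" and uc: "continuous_on \<Omega> u"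
    using u unfolding Kc_vec_def by blast+
  have um: "u \<in> borel_measurable lam\<Omega>"
    using borel_measurable_continuous_on_restrict[OF uc]
      measurable_cong_sets[OF sets_restrict_space_cong[OF sets_lam] refl] by blast
  define C where "C = insert 0 (u ` K)"
  have C: "compact C" using compact_continuous_image[OF continuous_on_subset[OF uc K(2)] K(1)]
    by (simp add: C_def)
  have uC: "u ` space lam\<Omega> \<subseteq> C" using K(3) by (force simp: C_def)
  obtain B where B: "\<And>x. x \<in> \<Omega> \<Longrightarrow> norm (u x) \<le> B"
    using compact_imp_bounded[OF C] uC unfolding bounded_iff by auto
  have G: "integrable lam\<Omega> (\<lambda>x. norm (g x) * norm (u x))"
  proof (rule Bochner_Integration.integrable_bound[where f="\<lambda>x. B * norm (g x)"])
    show "integrable lam\<Omega> (\<lambda>x. B * norm (g x))" using g by simp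
    show "(\<lambda>x. norm (g x) * norm (u x)) \<in> borel_measurable lam\<Omega>" using g um by measurable
    show "AE x in lam\<Omega>. norm (norm (g x) * norm (u x)) \<le> norm (B * norm (g x))"
    proof (rule AE_I2)
      fix x assume "x \<in> space lam\<Omega>"
      then have "norm (g x) * norm (u x) \<le> norm (g x) * \<bar>B\<bar>"
        using B[of x] by (intro mult_left_mono) auto
      then show "norm (norm (g x) * norm (u x)) \<le> norm (B * norm (g x))"
        by (simp add: abs_mult mult.commute)
    qed
  qed
  show "((\<lambda>\<epsilon>. LINT x|lam\<Omega>. g x * apply_bcontfun (u x) (H \<epsilon> x)) \<longlongrightarrow> (LINT x|lam\<Omega>. g x * Mv (u x))) F"
  proof (rule mean_convergence)
    show "strongly_measurable lam\<Omega> u" by (rule strongly_measurable_compact_range[OF um C uC])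
    show "integrable lam\<Omega> (\<lambda>x. indicator {x\<in>\<Omega>. r \<le> norm (u x)} x *\<^sub>R g x)" for r
    proof (rule integrable_mult_indicator[OF _ g])
      have "{x\<in>space lam\<Omega>. r \<le> norm (u x)} \<in> sets lam\<Omega>" using um by measurable
      then show "{x\<in>\<Omega>. r \<le> norm (u x)} \<in> sets lam\<Omega>" by simp
    qed
  qed (use uA g G in auto)
qed

lemma Lp_convergence:
  assumes p: "1 \<le> p" and u: "u \<in> Lp_vec lam\<Omega> p A"
  shows "(\<forall>\<epsilon>\<in>E. in_Lp lam\<Omega> p (\<lambda>x. apply_bcontfun (u x) (H \<epsilon> x)))"
    and "weak_Lp_tendsto lam\<Omega> p (\<lambda>\<epsilon> x. apply_bcontfun (u x) (H \<epsilon> x)) (\<lambda>x. Mv (u x)) F"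
proof -
  have uA: "\<And>x. x \<in> \<Omega> \<Longrightarrow> u x \<in> A" and us: "strongly_measurable lam\<Omega> u"
    and up: "integrable lam\<Omega> (\<lambda>x. norm (u x) powr p)"
    using u unfolding Lp_vec_def strongly_measurable_def by auto
  have um: "u \<in> borel_measurable lam\<Omega>" by (rule strongly_measurable_imp_borel[OF us])
  obtain w where w: "\<And>n. simple_function lam\<Omega> (w n)" "\<And>n x. w n x \<in> A"
    "\<And>x. x \<in> \<Omega> \<Longrightarrow> (\<lambda>n. w n x) \<longlonglongrightarrow> u x" "\<And>n x. norm (w n x) \<le> 2 * norm (u x)"
    using strongly_measurable_dominated_approximation[OF us _ A_zero] uA by auto
  show "\<forall>\<epsilon>\<in>E. in_Lp lam\<Omega> p (\<lambda>x. apply_bcontfun (u x) (H \<epsilon> x))"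
  proof
    fix \<epsilon> assume \<epsilon>: "\<epsilon> \<in> E"
    note osc = measurable_oscillation[OF w(1-3) uA \<epsilon>]
    have "integrable lam\<Omega> (\<lambda>x. norm (apply_bcontfun (u x) (H \<epsilon> x)) powr p)"
    proof (rule Bochner_Integration.integrable_bound[OF up])
      show "(\<lambda>x. norm (apply_bcontfun (u x) (H \<epsilon> x)) powr p) \<in> borel_measurable lam\<Omega>"
        using osc by measurable
      show "AE x in lam\<Omega>. norm (norm (apply_bcontfun (u x) (H \<epsilon> x)) powr p) \<le> norm (norm (u x) powr p)"
        using p by (intro AE_I2) (simp add: powr_mono2 norm_bounded)
    qed
    then show "in_Lp lam\<Omega> p (\<lambda>x. apply_bcontfun (u x) (H \<epsilon> x))" using osc by (simp add: in_Lp_def)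
  qed
  show "weak_Lp_tendsto lam\<Omega> p (\<lambda>\<epsilon> x. apply_bcontfun (u x) (H \<epsilon> x)) (\<lambda>x. Mv (u x)) F"
    unfolding weak_Lp_tendsto_def
  proof (intro allI impI)
    fix g assume g: "in_Lconj lam\<Omega> p g"
    have gm: "g \<in> borel_measurable lam\<Omega>" using g by (simp add: in_Lconj_def)
    have level: "integrable lam\<Omega> (\<lambda>x. indicator {x\<in>\<Omega>. r \<le> norm (u x)} x *\<^sub>R g x)"
      if "r > 0" for r
      using integrable_Lconj_superlevel[OF p g _ _ up that] um by simp
    have "integrable lam\<Omega> (\<lambda>x. norm (g x) * norm (u x))"
      using um up by (intro integrable_norm_mult_Lconj[OF p g]) auto
    with mean_convergence[OF us uA gm _ level]
    show "((\<lambda>\<epsilon>. LINT x|lam\<Omega>. apply_bcontfun (u x) (H \<epsilon> x) * g x) \<longlongrightarrow> (LINT x|lam\<Omega>. Mv (u x) * g x)) F"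
      by (simp add: mult.commute)
  qed
qed

end

theorem proposition4p2:
  fixes E :: "real set" and mul :: "real \<Rightarrow> real \<Rightarrow> real" and e :: real
    and H :: "real \<Rightarrow> 'a::{t2_space,first_countable_topology} \<Rightarrow> 'a"
    and lam :: "'a measure" and \<Omega> :: "'a set" and A :: "('a \<Rightarrow>\<^sub>C complex) set"
  assumes hom: "homogenizer E mul e H lam"
    and \<Omega>: "open \<Omega>" "\<Omega> \<noteq> {}"
    and A: "closed_complex_subspace A" "A \<subseteq> Pi_inf E H lam"
  shows
    "(\<forall>u \<in> Kc_vec \<Omega> A.
        wstar_tendsto (restrict_space lam \<Omega>) (\<lambda>\<epsilon> x. apply_bcontfun (u x) (H \<epsilon> x))
          (\<lambda>x. mean_value E H lam (u x)) (to_theta E))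
     \<and>
     (\<forall>p::real. 1 \<le> p \<longrightarrow> (\<forall>u \<in> Lp_vec (restrict_space lam \<Omega>) p A.
        (\<forall>\<epsilon>\<in>E. in_Lp (restrict_space lam \<Omega>) p (\<lambda>x. apply_bcontfun (u x) (H \<epsilon> x))) \<and>
        weak_Lp_tendsto (restrict_space lam \<Omega>) p (\<lambda>\<epsilon> x. apply_bcontfun (u x) (H \<epsilon> x))
          (\<lambda>x. mean_value E H lam (u x)) (to_theta E)))"
proof -
  interpret homogenization_setting E mul e H lam \<Omega> A
    using hom \<Omega>(1) A by unfold_locales
  show ?thesis
    using compact_support_convergence Lp_convergence by blast
qed

end
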